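(* Let $\lambda>0$ and let $X_1,\dots,X_n$ be i.i.d. Poisson random variables with mean $\lambda$. For $z>0$ let $$\Delta=\min\left\{\frac12,\ \frac{C_{\mathrm{BE}}}{\sqrt n}\Big(3z^2+8z+3+\frac1z\Big)^{3/4}\right\}.$$ Then $$\Pr\Big\{\frac1n\sum_{i=1}^nX_i\ge z\ \Big|\ \lambda\Big\}\le\Big(\frac12+\Delta\Big)\Big(\frac{\lambda^ze^z}{z^ze^\lambda}\Big)^n\quad\text{for } z\ge\lambda,$$ $$\Pr\Big\{\frac1n\sum_{i=1}^nX_i\le z\ \Big|\ \lambda\Big\}\le\Big(\frac12+\Delta\Big)\Big(\frac{\lambda^ze^z}{z^ze^\lambda}\Big)^n\quad\text{for } 0<z\le\lambda.$$
   Context: $C_{\mathrm{BE}}$ denotes the absolute constant in the Berry–Esseen inequality: for i.i.d. $Y_1,Y_2,\dots$ distributed as $Y$ with $\mathbb{E}[Y]=0$, $\mathbb{E}[Y^2]>0$, $\mathbb{E}[|Y|^3]<\infty$, the cdf $F_n$ of $\sum_{i=1}^nY_i/\sqrt{n\mathbb{E}[Y^2]}$ satisfies $|F_n(y)-\Phi(y)|\le\frac{C_{\mathrm{BE}}}{\sqrt n}\frac{\mathbb{E}[|Y|^3]}{\mathbb{E}^{3/2}[Y^2]}$ for all $y,n$, where $\Phi$ is the standard normal cdf. *)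

theory Defs
  imports "HOL-Probability.Probability"
begin

definition std_normal_cdf :: "real \<Rightarrow> real" where
  "std_normal_cdf y = measure std_normal_distribution {..y}"

definition berry_esseen_const :: "real \<Rightarrow> bool" where
  "berry_esseen_const C \<longleftrightarrow>
     (\<forall>(D :: real measure) (n :: nat) (y :: real).
        prob_space D \<and> sets D = sets borel \<and>
        integrable D (\<lambda>x. \<bar>x\<bar> ^ 3) \<and>
        (\<integral>x. x \<partial>D) = 0 \<and> (\<integral>x. x\<^sup>2 \<partial>D) > 0 \<and> n \<ge> 1 \<longrightarrow>
        \<bar>measure (PiM {..<n} (\<lambda>_. D))
            {\<omega> \<in> space (PiM {..<n} (\<lambda>_. D)).
               (\<Sum>i<n. \<omega> i) / sqrt (real n * (\<integral>x. x\<^sup>2 \<partial>D)) \<le> y}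
          - std_normal_cdf y\<bar>
        \<le> C / sqrt (real n) * (\<integral>x. \<bar>x\<bar> ^ 3 \<partial>D) / (\<integral>x. x\<^sup>2 \<partial>D) powr (3/2))"

end

theory Submission
  imports Defs
begin

text \<open>Exponential tilting: the likelihood ratio of \<open>n\<close> independent Poisson(\<open>\<lambda>\<close>) variables against
  \<open>n\<close> independent Poisson(\<open>z\<close>) variables is \<open>(\<lambda>/z)\<^sup>S exp (n (z - \<lambda>))\<close>, \<open>S\<close> being their sum. On the
  event \<open>S \<ge> n z\<close> (for \<open>\<lambda> \<le> z\<close>), resp. \<open>S \<le> n z\<close> (for \<open>z \<le> \<lambda>\<close>), it is at most the Chernoff factor
  \<open>(\<lambda>\<^sup>z e\<^sup>z / (z\<^sup>z e\<^sup>\<lambda>))\<^sup>n\<close>. Under the tilted law the event is a half-line bounded by the mean of \<open>S\<close>,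
  so Berry--Esseen puts its probability within the error term of \<open>\<Phi>(0) = 1/2\<close>. The Lyapunov ratio in
  that error term is bounded by the second and fourth central moments \<open>z\<close> and \<open>3z\<^sup>2 + z\<close> of
  Poisson(\<open>z\<close>), which follow from its factorial moments \<open>E[K(K-1)\<cdots>(K-j+1)] = z\<^sup>j\<close>.\<close>

section \<open>Moments of the Poisson distribution\<close>

lemma has_bochner_integral_measure_pmf_nat:
  fixes p :: "nat pmf" and h :: "nat \<Rightarrow> real"
  assumes "summable (\<lambda>k. pmf p k * \<bar>h k\<bar>)" and "(\<lambda>k. pmf p k * h k) sums s"
  shows "has_bochner_integral (measure_pmf p) h s"
proof -
  have "integrable (count_space UNIV) (\<lambda>k. pmf p k *\<^sub>R h k)"
    using assms(1) by (simp add: integrable_count_space_nat_iff abs_mult)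
  moreover from this have "integral\<^sup>L (count_space UNIV) (\<lambda>k. pmf p k *\<^sub>R h k) = s"
    by (subst integral_count_space_nat) (use assms(2) in \<open>simp_all add: sums_iff\<close>)
  ultimately show ?thesis
    by (simp add: has_bochner_integral_iff measure_pmf_eq_density integrable_density integral_density)
qed

lemma has_bochner_integral_measure_pmf_nat_nonneg:
  fixes p :: "nat pmf" and h :: "nat \<Rightarrow> real"
  assumes "\<And>k. h k \<ge> 0" and "(\<lambda>k. pmf p k * h k) sums s"
  shows "has_bochner_integral (measure_pmf p) h s"
  using assms by (intro has_bochner_integral_measure_pmf_nat) (auto intro: sums_summable)

definition falling_factorial :: "nat \<Rightarrow> nat \<Rightarrow> real" where
  "falling_factorial j k = (\<Prod>i<j. real k - real i)"

lemma falling_factorial_0 [simp]: "falling_factorial 0 k = 1"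
  by (simp add: falling_factorial_def)

lemma falling_factorial_Suc_Suc:
  "falling_factorial (Suc j) (Suc k) = real (Suc k) * falling_factorial j k"
  unfolding falling_factorial_def by (subst prod.lessThan_Suc_shift) simp

lemma falling_factorial_Suc_0 [simp]: "falling_factorial (Suc j) 0 = 0"
  unfolding falling_factorial_def by (subst prod.lessThan_Suc_shift) simp

lemma falling_factorial_1 [simp]: "falling_factorial (Suc 0) k = real k"
  by (simp add: falling_factorial_def)

lemma sums_falling_factorial_exp:
  fixes z :: real
  shows "(\<lambda>k. z ^ k / fact k * falling_factorial j k) sums (z ^ j * exp z)"
proof (induction j)
  case 0
  show ?case using exp_converges[of z] by (simp add: divide_inverse mult.commute)
next
  case (Suc j)
  have "(\<lambda>k. z ^ Suc k / fact (Suc k) * falling_factorial (Suc j) (Suc k))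
          = (\<lambda>k. z * (z ^ k / fact k * falling_factorial j k))"
    by (auto simp: falling_factorial_Suc_Suc fun_eq_iff field_simps simp del: of_nat_Suc)
  with sums_mult[OF Suc.IH, of z]
  have "(\<lambda>k. z ^ Suc k / fact (Suc k) * falling_factorial (Suc j) (Suc k)) sums (z * (z ^ j * exp z))"
    by simp
  from sums_Suc_iff[THEN iffD1, OF this] show ?case by (simp add: mult_ac)
qed

lemma poisson_falling_factorial_moment_sums:
  fixes z :: real
  assumes "z > 0"
  shows "(\<lambda>k. pmf (poisson_pmf z) k * falling_factorial j k) sums (z ^ j)"
proof -
  have "(\<lambda>k. exp (- z) * (z ^ k / fact k * falling_factorial j k)) sums (exp (- z) * (z ^ j * exp z))"
    by (rule sums_mult[OF sums_falling_factorial_exp])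
  then show ?thesis using assms by (simp add: exp_minus field_simps)
qed

context
  fixes z :: real
  assumes z: "z > 0"
begin

lemma poisson_mean: "has_bochner_integral (poisson_pmf z) real z"
  using poisson_falling_factorial_moment_sums[OF z, of 1]
  by (intro has_bochner_integral_measure_pmf_nat_nonneg) simp_all

lemma poisson_variance: "has_bochner_integral (poisson_pmf z) (\<lambda>k. (real k - z) ^ 2) z"
proof (rule has_bochner_integral_measure_pmf_nat_nonneg)
  let ?m = "\<lambda>j k. pmf (poisson_pmf z) k * falling_factorial j k"
  have expand: "?m 2 k + ((1 - 2 * z) * ?m 1 k + z\<^sup>2 * ?m 0 k)
      = pmf (poisson_pmf z) k * (real k - z) ^ 2" for k
    by (simp add: falling_factorial_def eval_nat_numeral lessThan_Suc algebra_simps)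
  have "(\<lambda>k. ?m 2 k + ((1 - 2 * z) * ?m 1 k + z\<^sup>2 * ?m 0 k))
         sums (z ^ 2 + ((1 - 2 * z) * z ^ 1 + z\<^sup>2 * z ^ 0))"
    by (intro sums_add sums_mult poisson_falling_factorial_moment_sums z)
  then show "(\<lambda>k. pmf (poisson_pmf z) k * (real k - z) ^ 2) sums z"
    by (simp only: expand) (simp add: algebra_simps power2_eq_square)
qed simp

lemma poisson_fourth_central_moment:
  "has_bochner_integral (poisson_pmf z) (\<lambda>k. (real k - z) ^ 4) (3 * z\<^sup>2 + z)"
proof (rule has_bochner_integral_measure_pmf_nat_nonneg)
  let ?m = "\<lambda>j k. pmf (poisson_pmf z) k * falling_factorial j k"
  have expand: "?m 4 k + ((6 - 4 * z) * ?m 3 k + ((7 - 12 * z + 6 * z\<^sup>2) * ?m 2 k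
            + ((1 - 4 * z + 6 * z\<^sup>2 - 4 * z ^ 3) * ?m 1 k + z ^ 4 * ?m 0 k)))
      = pmf (poisson_pmf z) k * (real k - z) ^ 4" for k
    by (simp add: falling_factorial_def eval_nat_numeral lessThan_Suc algebra_simps)
  have "(\<lambda>k. ?m 4 k + ((6 - 4 * z) * ?m 3 k + ((7 - 12 * z + 6 * z\<^sup>2) * ?m 2 k
            + ((1 - 4 * z + 6 * z\<^sup>2 - 4 * z ^ 3) * ?m 1 k + z ^ 4 * ?m 0 k))))
         sums (z ^ 4 + ((6 - 4 * z) * z ^ 3 + ((7 - 12 * z + 6 * z\<^sup>2) * z ^ 2
            + ((1 - 4 * z + 6 * z\<^sup>2 - 4 * z ^ 3) * z ^ 1 + z ^ 4 * z ^ 0))))"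
    by (intro sums_add sums_mult poisson_falling_factorial_moment_sums z)
  then show "(\<lambda>k. pmf (poisson_pmf z) k * (real k - z) ^ 4) sums (3 * z\<^sup>2 + z)"
    by (simp only: expand) (simp add: algebra_simps eval_nat_numeral)
qed (simp add: zero_le_even_power)

end

lemma abs_cube_le_weighted:
  fixes x t :: real
  assumes "t > 0"
  shows "\<bar>x\<bar> ^ 3 \<le> (t * x\<^sup>2 + x ^ 4 / t) / 2"
proof -
  have "0 \<le> (\<bar>x\<bar>\<^sup>2 - t * \<bar>x\<bar>)\<^sup>2" by simp
  then have "2 * t * \<bar>x\<bar> ^ 3 \<le> x ^ 4 + t\<^sup>2 * x\<^sup>2"
    by (simp add: algebra_simps eval_nat_numeral power_even_abs_numeral)
  with assms show ?thesis by (simp add: field_simps power2_eq_square)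
qed

lemma
  fixes M :: "real measure" and t :: real
  assumes "sets M = sets borel" and "integrable M (\<lambda>x. x\<^sup>2)" and "integrable M (\<lambda>x. x ^ 4)"
    and "t > 0"
  shows integrable_abs_cube: "integrable M (\<lambda>x. \<bar>x\<bar> ^ 3)"
    and integral_abs_cube_le: "(\<integral>x. \<bar>x\<bar> ^ 3 \<partial>M) \<le> (t * (\<integral>x. x\<^sup>2 \<partial>M) + (\<integral>x. x ^ 4 \<partial>M) / t) / 2"
proof -
  have bound: "integrable M (\<lambda>x. (t * x\<^sup>2 + x ^ 4 / t) / 2)"
    using assms(2,3) by (intro integrable_divide Bochner_Integration.integrable_add integrable_mult_right)
  have "(\<lambda>x. \<bar>x\<bar> ^ 3) \<in> borel_measurable M"
    by (simp add: measurable_cong_sets[OF assms(1) refl])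
  moreover have "norm (\<bar>x\<bar> ^ 3) \<le> norm ((t * x\<^sup>2 + x ^ 4 / t) / 2)" for x
    using abs_cube_le_weighted[OF assms(4), of x] by simp
  ultimately show int: "integrable M (\<lambda>x. \<bar>x\<bar> ^ 3)"
    by (intro Bochner_Integration.integrable_bound[OF bound]) auto
  have "(\<integral>x. \<bar>x\<bar> ^ 3 \<partial>M) \<le> (\<integral>x. (t * x\<^sup>2 + x ^ 4 / t) / 2 \<partial>M)"
    using assms(4) abs_cube_le_weighted by (intro Bochner_Integration.integral_mono[OF int bound]) auto
  also have "\<dots> = (t * (\<integral>x. x\<^sup>2 \<partial>M) + (\<integral>x. x ^ 4 \<partial>M) / t) / 2"
    using assms(2,3) by simp
  finally show "(\<integral>x. \<bar>x\<bar> ^ 3 \<partial>M) \<le> (t * (\<integral>x. x\<^sup>2 \<partial>M) + (\<integral>x. x ^ 4 \<partial>M) / t) / 2" .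
qed

lemma integral_abs_cube_pos:
  fixes M :: "real measure"
  assumes "sets M = sets borel" and "integrable M (\<lambda>x. \<bar>x\<bar> ^ 3)" and "integrable M (\<lambda>x. x\<^sup>2)"
    and "(\<integral>x. x\<^sup>2 \<partial>M) > 0"
  shows "(\<integral>x. \<bar>x\<bar> ^ 3 \<partial>M) > 0"
proof (rule ccontr)
  assume "\<not> (\<integral>x. \<bar>x\<bar> ^ 3 \<partial>M) > 0"
  moreover have "(\<integral>x. \<bar>x\<bar> ^ 3 \<partial>M) \<ge> 0"
    by (rule Bochner_Integration.integral_nonneg) simp
  ultimately have "(\<integral>x. \<bar>x\<bar> ^ 3 \<partial>M) = 0"
    by linarith
  then have "AE x in M. \<bar>x\<bar> ^ 3 = 0"
    using integral_nonneg_eq_0_iff_AE[OF assms(2)] by simp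
  then have "AE x in M. x\<^sup>2 = 0"
    by eventually_elim simp
  then have "(\<integral>x. x\<^sup>2 \<partial>M) = (\<integral>x. 0 \<partial>M)"
    by (intro integral_cong_AE) (simp_all add: measurable_cong_sets[OF assms(1) refl])
  with assms(4) show False by simp
qed

definition centred_poisson :: "real \<Rightarrow> real measure" where
  "centred_poisson z = distr (measure_pmf (poisson_pmf z)) borel (\<lambda>k. real k - z)"

lemma prob_space_centred_poisson: "prob_space (centred_poisson z)"
  unfolding centred_poisson_def by (intro measure_pmf.prob_space_distr) simp

lemma sets_centred_poisson [simp]: "sets (centred_poisson z) = sets borel"
  by (simp add: centred_poisson_def)

lemma has_bochner_integral_centred_poisson:
  fixes f :: "real \<Rightarrow> real"
  assumes "has_bochner_integral (poisson_pmf z) (\<lambda>k. f (real k - z)) s" and "f \<in> borel_measurable borel"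
  shows "has_bochner_integral (centred_poisson z) f s"
  unfolding centred_poisson_def using assms by (intro has_bochner_integral_distr) simp_all

context
  fixes z :: real
  assumes z: "z > 0"
begin

lemma centred_poisson_mean: "has_bochner_integral (centred_poisson z) (\<lambda>x. x) 0"
proof (rule has_bochner_integral_centred_poisson)
  have "integrable (poisson_pmf z) real" and "(\<integral>k. real k \<partial>poisson_pmf z) = z"
    using poisson_mean[OF z] by (auto simp: has_bochner_integral_iff)
  then show "has_bochner_integral (poisson_pmf z) (\<lambda>k. real k - z) 0"
    by (simp add: has_bochner_integral_iff)
qed simp

lemma centred_poisson_variance: "has_bochner_integral (centred_poisson z) (\<lambda>x. x\<^sup>2) z"
  using poisson_variance[OF z] by (rule has_bochner_integral_centred_poisson) simp

lemma centred_poisson_fourth_moment: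
  "has_bochner_integral (centred_poisson z) (\<lambda>x. x ^ 4) (3 * z\<^sup>2 + z)"
  using poisson_fourth_central_moment[OF z] by (rule has_bochner_integral_centred_poisson) simp

lemma integrable_abs_cube_centred_poisson: "integrable (centred_poisson z) (\<lambda>x. \<bar>x\<bar> ^ 3)"
  using centred_poisson_variance centred_poisson_fourth_moment
  by (intro integrable_abs_cube[where t = 1]) (auto intro: integrable.intros)

end

lemma centred_poisson_lyapunov_ratio_le:
  fixes z :: real
  assumes z: "z > 0"
  shows "(\<integral>x. \<bar>x\<bar> ^ 3 \<partial>centred_poisson z) / (\<integral>x. x\<^sup>2 \<partial>centred_poisson z) powr (3/2)
    \<le> (3 * z\<^sup>2 + 8 * z + 3 + 1 / z) powr (3/4)"
proof -
  \<comment> \<open>the optimal weight \<open>(E Y\<^sup>4 / E Y\<^sup>2)\<^sup>1\<^sup>/\<^sup>2\<close>, for which the bound is Cauchy--Schwarz\<close>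
  define t where "t = sqrt (3 * z + 1)"
  define K where "K = 3 * z\<^sup>2 + 8 * z + 3 + 1 / z"
  have t: "t > 0" "t\<^sup>2 = 3 * z + 1"
    using z by (simp_all add: t_def)
  have K: "K \<ge> 1"
    using z by (simp add: K_def)
  have m2: "(\<integral>x. x\<^sup>2 \<partial>centred_poisson z) = z"
    and m4: "(\<integral>x. x ^ 4 \<partial>centred_poisson z) = 3 * z\<^sup>2 + z"
    using centred_poisson_variance[OF z] centred_poisson_fourth_moment[OF z]
    by (simp_all add: has_bochner_integral_integral_eq)
  have "(\<integral>x. \<bar>x\<bar> ^ 3 \<partial>centred_poisson z) \<le> (t * z + (3 * z\<^sup>2 + z) / t) / 2"
    using integral_abs_cube_le[of "centred_poisson z" t] centred_poisson_variance[OF z]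
      centred_poisson_fourth_moment[OF z] t(1)
    by (auto simp: m2 m4 intro: integrable.intros)
  also have "(3 * z\<^sup>2 + z) / t = z * t\<^sup>2 / t"
    using t(2) by (simp add: algebra_simps power2_eq_square)
  also have "(t * z + z * t\<^sup>2 / t) / 2 = z * t"
    using t(1) by (simp add: power2_eq_square)
  finally have E3: "(\<integral>x. \<bar>x\<bar> ^ 3 \<partial>centred_poisson z) \<le> z * t" .
  have "(\<integral>x. \<bar>x\<bar> ^ 3 \<partial>centred_poisson z) / z powr (3/2) \<le> z * t / z powr (3/2)"
    using E3 by (intro divide_right_mono) auto
  also have "z * t / z powr (3/2) = sqrt ((3 * z + 1) / z)"
    using z powr_add[of z 1 "1/2"] by (simp add: t_def powr_half_sqrt real_sqrt_divide)
  also have "\<dots> = sqrt (3 + 1 / z)"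
    using z by (simp add: field_simps)
  also have "\<dots> \<le> sqrt K"
    using z by (intro real_sqrt_le_mono) (simp add: K_def)
  also have "\<dots> = K powr (1/2)"
    using K by (simp add: powr_half_sqrt)
  also have "\<dots> \<le> K powr (3/4)"
    using K by (intro powr_mono) auto
  finally show ?thesis
    by (simp add: m2 K_def)
qed

section \<open>The standard normal distribution function\<close>

interpretation std_normal: prob_space std_normal_distribution
  using real_dist_normal_dist by (simp add: real_distribution_def)

lemma std_normal_density_le_1: "std_normal_density x \<le> 1"
  unfolding std_normal_density_def using pi_gt3
  by (intro mult_le_one) (simp_all add: divide_le_eq)

lemma emeasure_std_normal_le_lborel:
  assumes "A \<in> sets borel"
  shows "emeasure std_normal_distribution A \<le> emeasure lborel A"
proof -
  have "emeasure std_normal_distribution A = (\<integral>\<^sup>+ x. ennreal (std_normal_density x) * indicator A x \<partial>lborel)"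
    using assms by (subst emeasure_density) auto
  also have "\<dots> \<le> (\<integral>\<^sup>+ x. indicator A x \<partial>lborel)"
    by (intro nn_integral_mono) (auto simp: std_normal_density_le_1 split: split_indicator)
  also have "\<dots> = emeasure lborel A"
    using assms by simp
  finally show ?thesis .
qed

lemma std_normal_cdf_diff_le:
  assumes "x \<le> y"
  shows "std_normal_cdf y - std_normal_cdf x \<le> y - x"
proof -
  have "std_normal_cdf y = std_normal_cdf x + measure std_normal_distribution {x<..y}"
    unfolding std_normal_cdf_def using assms
    by (subst std_normal.finite_measure_Union[symmetric]) (auto intro!: arg_cong[where f = "measure _"])
  moreover have "ennreal (measure std_normal_distribution {x<..y}) \<le> ennreal (y - x)"
    using emeasure_std_normal_le_lborel[of "{x<..y}"] assms by (simp add: std_normal.emeasure_eq_measure)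
  then have "measure std_normal_distribution {x<..y} \<le> y - x"
    using assms by (simp add: ennreal_le_iff)
  ultimately show ?thesis
    by simp
qed

lemma measure_std_normal_atMost_eq_atLeast:
  "measure std_normal_distribution {..x} = measure std_normal_distribution {-x..}"
proof -
  have "emeasure std_normal_distribution {-x..} = (\<integral>\<^sup>+ y. ennreal (std_normal_density y) * indicator {-x..} y \<partial>lborel)"
    by (subst emeasure_density) auto
  also have "\<dots> = (\<integral>\<^sup>+ y. ennreal (std_normal_density y) * indicator {-x..} y \<partial>distr lborel borel uminus)"
    by (simp add: lborel_distr_uminus)
  also have "\<dots> = (\<integral>\<^sup>+ y. ennreal (std_normal_density (- y)) * indicator {-x..} (- y) \<partial>lborel)"
    by (subst nn_integral_distr) auto
  also have "\<dots> = (\<integral>\<^sup>+ y. ennreal (std_normal_density y) * indicator {..x} y \<partial>lborel)"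
    by (intro nn_integral_cong) (auto simp: std_normal_density_def split: split_indicator)
  also have "\<dots> = emeasure std_normal_distribution {..x}"
    by (subst emeasure_density) auto
  finally show ?thesis
    by (simp add: std_normal.emeasure_eq_measure)
qed

lemma std_normal_cdf_0: "std_normal_cdf 0 = 1/2"
proof -
  have "emeasure std_normal_distribution {0::real} = 0"
    using emeasure_std_normal_le_lborel[of "{0}"] by simp
  then have "measure std_normal_distribution {0::real} = 0"
    by (simp add: std_normal.emeasure_eq_measure)
  moreover have "{0..} = {0} \<union> {0::real<..}"
    by auto
  ultimately have "measure std_normal_distribution {0..} = measure std_normal_distribution {0<..}"
    using std_normal.finite_measure_Union[of "{0}" "{0<..}"] by simp
  also have "\<dots> = 1 - measure std_normal_distribution {..0}"
    using std_normal.prob_compl[of "{..0}"] by (simp add: Compl_eq_Diff_UNIV[symmetric])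
  finally show ?thesis
    using measure_std_normal_atMost_eq_atLeast[of 0] by (simp add: std_normal_cdf_def)
qed

section \<open>Berry--Esseen for sums of Poisson variables\<close>

lemma berry_esseen_const_nonneg:
  assumes "berry_esseen_const C"
  shows "C \<ge> 0"
proof -
  let ?D = "centred_poisson 1"
  have m2: "(\<integral>x. x\<^sup>2 \<partial>?D) = 1"
    using centred_poisson_variance[of 1] by (simp add: has_bochner_integral_integral_eq)
  have m1: "(\<integral>x. x \<partial>?D) = 0"
    using centred_poisson_mean[of 1] by (simp add: has_bochner_integral_integral_eq)
  have E3: "(\<integral>x. \<bar>x\<bar> ^ 3 \<partial>?D) > 0"
    using centred_poisson_variance[of 1] integrable_abs_cube_centred_poisson[of 1]
    by (intro integral_abs_cube_pos) (auto simp: m2 intro: integrable.intros)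
  have "\<bar>measure (PiM {..<1::nat} (\<lambda>_. ?D)) {\<omega> \<in> space (PiM {..<1::nat} (\<lambda>_. ?D)).
            (\<Sum>i<1. \<omega> i) / sqrt (real 1 * (\<integral>x. x\<^sup>2 \<partial>?D)) \<le> 0} - std_normal_cdf 0\<bar>
      \<le> C / sqrt (real 1) * (\<integral>x. \<bar>x\<bar> ^ 3 \<partial>?D) / (\<integral>x. x\<^sup>2 \<partial>?D) powr (3/2)"
    using prob_space_centred_poisson integrable_abs_cube_centred_poisson[of 1] m1 m2
    by (intro assms[unfolded berry_esseen_const_def, rule_format, of ?D 1 0]) simp_all
  then have "0 \<le> C * (\<integral>x. \<bar>x\<bar> ^ 3 \<partial>?D)"
    by (simp add: m2)
  with E3 show ?thesis
    by (simp add: zero_le_mult_iff)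
qed

lemma PiM_distr_pmf_eq_distr_Pi_pmf:
  fixes p :: "'a pmf" and g :: "'a \<Rightarrow> real"
  assumes I: "finite I" "I \<noteq> {}"
  shows "PiM I (\<lambda>_. distr (measure_pmf p) borel g)
       = distr (measure_pmf (Pi_pmf I d (\<lambda>_. p))) (PiM I (\<lambda>_. borel)) (\<lambda>x. \<lambda>i\<in>I. g (x i))"
proof -
  define Q where "Q = Pi_pmf I d (\<lambda>_. p)"
  have "prob_space.indep_vars (measure_pmf Q) (\<lambda>_. borel) (\<lambda>i. g \<circ> (\<lambda>x. x i)) I"
    unfolding Q_def
    by (intro prob_space.indep_vars_compose[OF measure_pmf.prob_space_axioms indep_vars_Pi_pmf]) (simp_all add: I)
  then have "distr Q (PiM I (\<lambda>_. borel)) (\<lambda>x. \<lambda>i\<in>I. (g \<circ> (\<lambda>x. x i)) x)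
        = PiM I (\<lambda>i. distr Q borel (g \<circ> (\<lambda>x. x i)))"
    using prob_space.indep_vars_iff_distr_eq_PiM'[OF measure_pmf.prob_space_axioms I(2),
        where M' = "\<lambda>_. borel" and X = "\<lambda>i. g \<circ> (\<lambda>x. x i)"]
    by simp
  also have "\<dots> = PiM I (\<lambda>_. distr (measure_pmf p) borel g)"
  proof (rule PiM_cong)
    fix i assume i: "i \<in> I"
    have "distr Q borel (g \<circ> (\<lambda>x. x i)) = distr (distr Q (count_space UNIV) (\<lambda>x. x i)) borel g"
      by (subst distr_distr) simp_all
    also have "distr Q (count_space UNIV) (\<lambda>x. x i) = measure_pmf (map_pmf (\<lambda>x. x i) Q)"
      by (simp add: map_pmf_rep_eq)
    also have "map_pmf (\<lambda>x. x i) Q = p"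
      unfolding Q_def using i I by (subst Pi_pmf_component) auto
    finally show "distr Q borel (g \<circ> (\<lambda>x. x i)) = distr (measure_pmf p) borel g" .
  qed simp
  finally show ?thesis
    by (simp add: Q_def o_def)
qed

lemma measure_PiM_distr_pmf_sum_le_eq:
  fixes p :: "'a pmf" and g :: "'a \<Rightarrow> real"
  assumes I: "finite I" "I \<noteq> {}"
  defines "M \<equiv> PiM I (\<lambda>_. distr (measure_pmf p) borel g)"
  shows "measure M {\<omega> \<in> space M. (\<Sum>i\<in>I. \<omega> i) / s \<le> y}
       = measure_pmf.prob (Pi_pmf I d (\<lambda>_. p)) {x. (\<Sum>i\<in>I. g (x i)) / s \<le> y}"
proof -
  let ?B = "PiM I (\<lambda>_. borel :: real measure)"
  let ?f = "\<lambda>x. \<lambda>i\<in>I. g (x i)"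
  have M: "M = distr (measure_pmf (Pi_pmf I d (\<lambda>_. p))) ?B ?f"
    unfolding M_def by (rule PiM_distr_pmf_eq_distr_Pi_pmf[OF I])
  have f: "?f \<in> measurable (measure_pmf (Pi_pmf I d (\<lambda>_. p))) ?B"
    by (auto simp: space_PiM)
  have S: "{\<omega> \<in> space ?B. (\<Sum>i\<in>I. \<omega> i) / s \<le> y} \<in> sets ?B"
    using I(1) by measurable
  show ?thesis
    unfolding M space_distr by (subst measure_distr[OF f S]) (auto intro!: arg_cong[where f = "measure _"] simp: space_PiM)
qed

lemma poisson_sum_cdf_approx:
  fixes C z :: real and n :: nat
  assumes C: "berry_esseen_const C" and z: "z > 0" and n: "n \<ge> 1"
  shows "\<bar>measure_pmf.prob (Pi_pmf {..<n} 0 (\<lambda>_. poisson_pmf z))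
            {x. (\<Sum>i<n. real (x i) - z) / sqrt (real n * z) \<le> y} - std_normal_cdf y\<bar>
    \<le> C / sqrt (real n) * (3 * z\<^sup>2 + 8 * z + 3 + 1 / z) powr (3/4)"
proof -
  let ?D = "centred_poisson z"
  have m1: "(\<integral>x. x \<partial>?D) = 0" and m2: "(\<integral>x. x\<^sup>2 \<partial>?D) = z"
    using centred_poisson_mean[OF z] centred_poisson_variance[OF z]
    by (simp_all add: has_bochner_integral_integral_eq)
  have "\<bar>measure (PiM {..<n} (\<lambda>_. ?D)) {\<omega> \<in> space (PiM {..<n} (\<lambda>_. ?D)).
            (\<Sum>i<n. \<omega> i) / sqrt (real n * (\<integral>x. x\<^sup>2 \<partial>?D)) \<le> y} - std_normal_cdf y\<bar>
      \<le> C / sqrt (real n) * (\<integral>x. \<bar>x\<bar> ^ 3 \<partial>?D) / (\<integral>x. x\<^sup>2 \<partial>?D) powr (3/2)"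
    using prob_space_centred_poisson integrable_abs_cube_centred_poisson[OF z] m1 m2 z n
    by (intro C[unfolded berry_esseen_const_def, rule_format, of ?D n y]) simp_all
  also have "\<dots> \<le> C / sqrt (real n) * (3 * z\<^sup>2 + 8 * z + 3 + 1 / z) powr (3/4)"
    using centred_poisson_lyapunov_ratio_le[OF z] berry_esseen_const_nonneg[OF C]
    by (simp only: times_divide_eq_right[symmetric]) (intro mult_left_mono; simp)
  finally show ?thesis
    using measure_PiM_distr_pmf_sum_le_eq[OF finite_lessThan, of n "poisson_pmf z" "\<lambda>k. real k - z",
        folded centred_poisson_def] n
    by (simp add: m2 lessThan_empty_iff)
qed

lemma poisson_sum_lower_tail_le:
  fixes C z :: real and n :: nat
  assumes C: "berry_esseen_const C" and z: "z > 0" and n: "n \<ge> 1"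
  shows "measure_pmf.prob (Pi_pmf {..<n} 0 (\<lambda>_. poisson_pmf z)) {x. (\<Sum>i<n. real (x i)) \<le> real n * z}
    \<le> 1/2 + C / sqrt (real n) * (3 * z\<^sup>2 + 8 * z + 3 + 1 / z) powr (3/4)"
proof -
  have "sqrt (real n * z) > 0"
    using z n by simp
  then have "{x. (\<Sum>i<n. real (x i)) \<le> real n * z}
      = {x. (\<Sum>i<n. real (x i) - z) / sqrt (real n * z) \<le> 0}"
    by (auto simp: sum_subtractf divide_le_0_iff)
  then show ?thesis
    using poisson_sum_cdf_approx[OF assms, of 0] std_normal_cdf_0 by (simp add: abs_le_iff)
qed

lemma poisson_sum_upper_tail_le:
  fixes C z :: real and n :: nat
  assumes C: "berry_esseen_const C" and z: "z > 0" and n: "n \<ge> 1"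
  shows "measure_pmf.prob (Pi_pmf {..<n} 0 (\<lambda>_. poisson_pmf z)) {x. real n * z \<le> (\<Sum>i<n. real (x i))}
    \<le> 1/2 + C / sqrt (real n) * (3 * z\<^sup>2 + 8 * z + 3 + 1 / z) powr (3/4)"
    (is "measure_pmf.prob ?Q ?A \<le> 1/2 + ?\<beta>")
proof (rule field_le_epsilon)
  \<comment> \<open>Berry--Esseen controls closed lower half-lines only, so approach \<open>{S < n z}\<close> from below.\<close>
  fix e :: real
  assume e: "e > 0"
  define L where "L = {x. (\<Sum>i<n. real (x i) - z) / sqrt (real n * z) \<le> - e}"
  have nz: "real n * z > 0"
    using z n by simp
  have "L \<subseteq> - ?A"
  proof
    fix x
    assume "x \<in> L"
    with e have "(\<Sum>i<n. real (x i) - z) / sqrt (real n * z) < 0"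
      by (simp add: L_def)
    with nz have "(\<Sum>i<n. real (x i)) < real n * z"
      by (auto simp: divide_less_0_iff sum_subtractf)
    then show "x \<in> - ?A"
      by simp
  qed
  then have "measure_pmf.prob ?Q L \<le> measure_pmf.prob ?Q (- ?A)"
    by (rule measure_pmf.finite_measure_mono) simp
  also have "\<dots> = 1 - measure_pmf.prob ?Q ?A"
    unfolding Compl_eq_Diff_UNIV by (subst measure_pmf.prob_compl[symmetric]) auto
  finally have "measure_pmf.prob ?Q L \<le> 1 - measure_pmf.prob ?Q ?A" .
  moreover have "std_normal_cdf (- e) - ?\<beta> \<le> measure_pmf.prob ?Q L"
    using poisson_sum_cdf_approx[OF assms, of "- e"] by (simp add: L_def abs_le_iff)
  moreover have "1/2 - e \<le> std_normal_cdf (- e)"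
    using std_normal_cdf_diff_le[of "- e" 0] std_normal_cdf_0 e by simp
  ultimately show "measure_pmf.prob ?Q ?A \<le> 1/2 + ?\<beta> + e"
    by linarith
qed

section \<open>Exponential tilting\<close>

lemma measure_pmf_prob_le_if_pmf_le:
  fixes p q :: "'a pmf"
  assumes "\<And>x. x \<in> A \<Longrightarrow> pmf p x \<le> K * pmf q x" and "K \<ge> 0"
  shows "measure_pmf.prob p A \<le> K * measure_pmf.prob q A"
proof -
  have "emeasure (measure_pmf p) A = (\<integral>\<^sup>+ x. ennreal (pmf p x) * indicator A x \<partial>count_space UNIV)"
    by (simp add: nn_integral_measure_pmf[symmetric])
  also have "\<dots> \<le> (\<integral>\<^sup>+ x. ennreal K * (ennreal (pmf q x) * indicator A x) \<partial>count_space UNIV)"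
    using assms by (intro nn_integral_mono) (auto simp: ennreal_mult[symmetric] split: split_indicator)
  also have "\<dots> = ennreal K * emeasure (measure_pmf q) A"
    by (simp add: nn_integral_cmult nn_integral_measure_pmf[symmetric])
  finally have "ennreal (measure_pmf.prob p A) \<le> ennreal (K * measure_pmf.prob q A)"
    using assms(2) by (simp add: measure_pmf.emeasure_eq_measure ennreal_mult)
  then show ?thesis
    using assms(2) by (simp add: ennreal_le_iff)
qed

lemma pmf_Pi_poisson_change_rate:
  fixes lam z :: real and x :: "'a \<Rightarrow> nat"
  assumes I: "finite I" and lam: "lam > 0" and z: "z > 0"
  shows "pmf (Pi_pmf I 0 (\<lambda>_. poisson_pmf lam)) x
       = (lam / z) ^ (\<Sum>i\<in>I. x i) * exp (z - lam) ^ card I * pmf (Pi_pmf I 0 (\<lambda>_. poisson_pmf z)) x"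
proof (cases "\<forall>i. i \<notin> I \<longrightarrow> x i = 0")
  case False
  then show ?thesis
    by (simp only: pmf_Pi[OF I] if_not_P[OF False] if_False mult_zero_right)
next
  case True
  have factor: "lam ^ k / fact k * exp (- lam) = (lam / z) ^ k * exp (z - lam) * (z ^ k / fact k * exp (- z))"
    for k
    using z by (simp add: power_divide exp_diff exp_minus field_simps)
  have "pmf (Pi_pmf I 0 (\<lambda>_. poisson_pmf lam)) x = (\<Prod>i\<in>I. lam ^ x i / fact (x i) * exp (- lam))"
    using True lam by (simp add: pmf_Pi[OF I])
  also have "\<dots> = (\<Prod>i\<in>I. (lam / z) ^ x i) * exp (z - lam) ^ card I
                  * (\<Prod>i\<in>I. z ^ x i / fact (x i) * exp (- z))"
    by (simp only: factor prod.distrib prod_constant)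
  also have "\<dots> = (lam / z) ^ (\<Sum>i\<in>I. x i) * exp (z - lam) ^ card I * pmf (Pi_pmf I 0 (\<lambda>_. poisson_pmf z)) x"
    using True z by (simp add: pmf_Pi[OF I] power_sum)
  finally show ?thesis .
qed

lemma prob_Pi_poisson_le_tilted:
  fixes lam z :: real and n :: nat
  assumes lam: "lam > 0" and z: "z > 0"
    and dominated: "\<And>x. x \<in> A \<Longrightarrow> (lam / z) powr (\<Sum>i<n. real (x i)) \<le> (lam / z) powr (real n * z)"
  shows "measure_pmf.prob (Pi_pmf {..<n} 0 (\<lambda>_. poisson_pmf lam)) A
    \<le> ((lam powr z * exp z) / (z powr z * exp lam)) ^ n * measure_pmf.prob (Pi_pmf {..<n} 0 (\<lambda>_. poisson_pmf z)) A"
proof (rule measure_pmf_prob_le_if_pmf_le)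
  have "(lam / z) powr (real n * z) * exp (z - lam) ^ n = ((lam / z) powr z * exp (z - lam)) ^ n"
    using lam z by (simp add: powr_powr[symmetric] powr_realpow power_mult_distrib mult.commute)
  also have "\<dots> = ((lam powr z * exp z) / (z powr z * exp lam)) ^ n"
    using lam z by (simp add: powr_divide exp_diff)
  finally have c: "(lam / z) powr (real n * z) * exp (z - lam) ^ n = ((lam powr z * exp z) / (z powr z * exp lam)) ^ n" .
  fix x
  assume "x \<in> A"
  then have "(lam / z) ^ (\<Sum>i<n. x i) \<le> (lam / z) powr (real n * z)"
    using dominated lam z by (simp add: powr_realpow[symmetric])
  then show "pmf (Pi_pmf {..<n} 0 (\<lambda>_. poisson_pmf lam)) x
      \<le> ((lam powr z * exp z) / (z powr z * exp lam)) ^ n * pmf (Pi_pmf {..<n} 0 (\<lambda>_. poisson_pmf z)) x"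
    unfolding pmf_Pi_poisson_change_rate[OF finite_lessThan lam z] card_lessThan c[symmetric]
    by (intro mult_right_mono) simp_all
qed (use lam z in simp)

lemma prob_Pi_poisson_upper_tail_le_tilted:
  fixes lam z :: real and n :: nat
  assumes "0 < lam" and "lam \<le> z"
  shows "measure_pmf.prob (Pi_pmf {..<n} 0 (\<lambda>_. poisson_pmf lam)) {x. real n * z \<le> (\<Sum>i<n. real (x i))}
    \<le> ((lam powr z * exp z) / (z powr z * exp lam)) ^ n
      * measure_pmf.prob (Pi_pmf {..<n} 0 (\<lambda>_. poisson_pmf z)) {x. real n * z \<le> (\<Sum>i<n. real (x i))}"
  using assms by (intro prob_Pi_poisson_le_tilted) (auto intro: powr_mono')

lemma prob_Pi_poisson_lower_tail_le_tilted:
  fixes lam z :: real and n :: nat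
  assumes "0 < z" and "z \<le> lam"
  shows "measure_pmf.prob (Pi_pmf {..<n} 0 (\<lambda>_. poisson_pmf lam)) {x. (\<Sum>i<n. real (x i)) \<le> real n * z}
    \<le> ((lam powr z * exp z) / (z powr z * exp lam)) ^ n
      * measure_pmf.prob (Pi_pmf {..<n} 0 (\<lambda>_. poisson_pmf z)) {x. (\<Sum>i<n. real (x i)) \<le> real n * z}"
  using assms by (intro prob_Pi_poisson_le_tilted) (auto intro: powr_mono)

theorem corollary4:
  fixes C lam z :: real and n :: nat
  assumes C: "berry_esseen_const C"
    and lam: "lam > 0" and z: "z > 0" and n: "n \<ge> 1"
  defines "\<Delta> \<equiv> min (1/2) (C / sqrt (real n) * (3 * z\<^sup>2 + 8 * z + 3 + 1 / z) powr (3/4))"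
  defines "B \<equiv> (1/2 + \<Delta>) * ((lam powr z * exp z) / (z powr z * exp lam)) ^ n"
  defines "P \<equiv> Pi_pmf {..<n} 0 (\<lambda>_. poisson_pmf lam)"
  shows "(z \<ge> lam \<longrightarrow> measure_pmf.prob P {X. (\<Sum>i<n. real (X i)) / real n \<ge> z} \<le> B)
       \<and> (z \<le> lam \<longrightarrow> measure_pmf.prob P {X. (\<Sum>i<n. real (X i)) / real n \<le> z} \<le> B)"
proof -
  define c where "c = ((lam powr z * exp z) / (z powr z * exp lam)) ^ n"
  have c: "c \<ge> 0"
    using lam z by (simp add: c_def)
  have tail: "measure_pmf.prob p A \<le> 1/2 + \<Delta>"
    if "measure_pmf.prob p A \<le> 1/2 + C / sqrt (real n) * (3 * z\<^sup>2 + 8 * z + 3 + 1 / z) powr (3/4)"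
    for p :: "(nat \<Rightarrow> nat) pmf" and A
    using that measure_pmf.prob_le_1 unfolding \<Delta>_def by (auto simp: min_def)
  have n_pos: "real n > 0"
    using n by simp
  show ?thesis
  proof (intro conjI impI)
    assume "lam \<le> z"
    then have "measure_pmf.prob P {X. real n * z \<le> (\<Sum>i<n. real (X i))} \<le> c * (1/2 + \<Delta>)"
      unfolding P_def c_def using prob_Pi_poisson_upper_tail_le_tilted[OF lam]
        mult_left_mono[OF tail[OF poisson_sum_upper_tail_le[OF C z n]] c[unfolded c_def]]
      by (blast intro: order_trans)
    with n_pos show "measure_pmf.prob P {X. (\<Sum>i<n. real (X i)) / real n \<ge> z} \<le> B"
      by (simp add: B_def c_def le_divide_eq mult.commute)
  next
    assume "z \<le> lam"
    then have "measure_pmf.prob P {X. (\<Sum>i<n. real (X i)) \<le> real n * z} \<le> c * (1/2 + \<Delta>)"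
      unfolding P_def c_def using prob_Pi_poisson_lower_tail_le_tilted[OF z]
        mult_left_mono[OF tail[OF poisson_sum_lower_tail_le[OF C z n]] c[unfolded c_def]]
      by (blast intro: order_trans)
    with n_pos show "measure_pmf.prob P {X. (\<Sum>i<n. real (X i)) / real n \<le> z} \<le> B"
      by (simp add: B_def c_def divide_le_eq mult.commute)
  qed
qed

end
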